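(* (i) Let $H_0 \subset \mathbb{S}^n$ be a hemisphere. Any family $(H_i)_{i \in I}$ of hemispheres such that the sets $H_0 \cap H_i$, $i\in I$, are non-empty and pairwise disjoint has cardinality at most $2$. (ii) Let $\min(p,q)\ge 2$ and let $M_0 \subset \widetilde{\mathrm{Ein}}^{p,q}$ be a Minkowski patch. Any family $(M_i)_{i\in I}$ of Minkowski patches such that the sets $M_0 \cap M_i$, $i \in I$, are non-empty and pairwise disjoint has cardinality at most $2$.
   Context: A hemisphere of $\mathbb{S}^n\subset\mathbb{R}^{n+1}$ is $\mathbb{S}^n\cap\{\ell>0\}$ for a nonzero linear form $\ell$. $\widetilde{\mathrm{Ein}}^{p,q}\cong\mathbb{S}^p\times\mathbb{S}^q$ is the set of isotropic vectors of Euclidean norm 1 of $\mathbb{R}^{p+1,q+1}$, double covering $\mathrm{Ein}^{p,q}$ (isotropic lines) via $\pi_{\mathbf{X}}$. A Minkowski patch of $\widetilde{\mathrm{Ein}}^{p,q}$ is a connected component of $\pi_{\mathbf{X}}^{-1}(M_x)$ with $M_x=\{[w]:B(v,w)\ne 0\}$ for an isotropic $v$, $x=[v]$. *)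

theory Defs
  imports "HOL-Analysis.Analysis"
begin

definition hemisphere :: "'a::euclidean_space set \<Rightarrow> bool" where
  "hemisphere H \<longleftrightarrow>
     (\<exists>l::'a \<Rightarrow> real. linear l \<and> l \<noteq> (\<lambda>_. 0) \<and> H = sphere 0 1 \<inter> {x. l x > 0})"

text \<open>R^{p+1,q+1} modelled as 'a \<times> 'b with DIM('a) = p+1, DIM('b) = q+1,
  and the bilinear form B of signature (p+1,q+1).\<close>
definition bform :: "('a::euclidean_space \<times> 'b::euclidean_space) \<Rightarrow> ('a \<times> 'b) \<Rightarrow> real" where
  "bform u w = fst u \<bullet> fst w - snd u \<bullet> snd w"

text \<open>The double cover of Ein: isotropic vectors of Euclidean norm 1.\<close>
definition EinT :: "('a::euclidean_space \<times> 'b::euclidean_space) set" where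
  "EinT = {w. bform w w = 0 \<and> norm w = 1}"

definition piX :: "('a::euclidean_space \<times> 'b::euclidean_space) \<Rightarrow> ('a \<times> 'b) set" where
  "piX w = span {w}"

definition Mx :: "('a::euclidean_space \<times> 'b::euclidean_space) \<Rightarrow> ('a \<times> 'b) set set" where
  "Mx v = {L. \<exists>w. w \<noteq> 0 \<and> bform w w = 0 \<and> L = span {w} \<and> bform v w \<noteq> 0}"

definition minkowski_patch :: "('a::euclidean_space \<times> 'b::euclidean_space) set \<Rightarrow> bool" where
  "minkowski_patch M \<longleftrightarrow>
     (\<exists>v. v \<noteq> 0 \<and> bform v v = 0 \<and>
        (\<exists>w \<in> EinT \<inter> piX -` Mx v.
           M = connected_component_set (EinT \<inter> piX -` Mx v) w))"

end

theory Submission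
  imports Defs
begin

text \<open>
  In an affine chart of the base patch, the sections by the other patches become positivity
  regions of functions on a real vector space \<open>W\<close>: affine functions \<open>c + l x\<close> on the hyperplane
  \<open>ker l\<^sub>0\<close> for hemispheres, and functions \<open>c + l x - k B(x,x)\<close> on the Minkowski space
  \<open>B\<close>-orthogonal to two null vectors for Minkowski patches. Two disjoint such regions cannot both
  be unbounded along a common ray. As \<open>B\<close> is indefinite on \<open>W\<close>, this forces the quadratic
  coefficients of two disjoint nonempty regions to have opposite signs or to vanish both, so
  among three regions they all vanish. Three disjoint nonempty affine regions would finally give
  three pairwise disjoint open half-spaces \<open>l\<^sub>i > 0\<close> of \<open>W\<close>, which is impossible: each of two
  disjoint half-spaces is negative on the other, and a suitable combination of points of the
  first two lies in the kernel of \<open>l\<^sub>2\<close> and in the third.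
\<close>

lemma card_le_2_if_no_three_distinct:
  assumes "\<And>i j k. \<lbrakk>i \<in> I; j \<in> I; k \<in> I; i \<noteq> j; i \<noteq> k; j \<noteq> k\<rbrakk> \<Longrightarrow> False"
  shows "finite I \<and> card I \<le> 2"
proof (rule ccontr)
  assume "\<not> (finite I \<and> card I \<le> 2)"
  then obtain T where "T \<subseteq> I" "card T = 3"
    by (metis infinite_arbitrarily_large not_le obtain_subset_with_card_n Suc_leI numeral_2_eq_2
        numeral_3_eq_3)
  then show False
    using assms unfolding card_3_iff by blast
qed

lemma eventually_linear_pos:
  fixes B C :: real
  assumes "B > 0"
  shows "eventually (\<lambda>t. B * t + C > 0) at_top"
  using eventually_gt_at_top[of "- C / B"]
  by eventually_elim (use assms in \<open>simp add: field_simps\<close>)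

lemma eventually_quadratic_pos:
  fixes A B C :: real
  assumes "A > 0"
  shows "eventually (\<lambda>t. A * t^2 + B * t + C > 0) at_top"
  using eventually_linear_pos[OF assms, of "B - 1"] eventually_gt_at_top[of "\<bar>C\<bar>"]
proof eventually_elim
  case (elim t)
  then have "t \<le> t * (A * t + B)"
    by (simp add: mult_le_cancel_left1)
  then show ?case
    using elim by (simp add: power2_eq_square algebra_simps)
qed

lemma disjoint_halfspaces_opposite_sign:
  fixes a b :: "'a::real_vector \<Rightarrow> real"
  assumes S: "subspace S" and lin: "linear a" "linear b"
    and e: "e \<in> S" "b e > 0"
    and disj: "\<forall>x\<in>S. \<not> (a x > 0 \<and> b x > 0)"
    and x: "x \<in> S" "a x > 0"
  shows "b x < 0"
proof (rule ccontr)
  assume "\<not> b x < 0"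
  \<comment> \<open>a small push towards \<open>e\<close> keeps \<open>a\<close> positive and makes \<open>b\<close> positive\<close>
  define \<epsilon> where "\<epsilon> = a x / (2 * (\<bar>a e\<bar> + 1))"
  have "\<epsilon> > 0"
    using x by (simp add: \<epsilon>_def)
  have "\<epsilon> * (\<bar>a e\<bar> + 1) = a x / 2"
    by (simp add: \<epsilon>_def field_simps)
  then have "\<epsilon> * \<bar>a e\<bar> < a x"
    using x \<open>\<epsilon> > 0\<close> by (simp add: distrib_left)
  moreover have "- \<bar>a e\<bar> \<le> a e"
    by simp
  then have "\<epsilon> * - \<bar>a e\<bar> \<le> \<epsilon> * a e"
    using \<open>\<epsilon> > 0\<close> by (intro mult_left_mono) auto
  ultimately have "a (x + \<epsilon> *\<^sub>R e) > 0"
    using lin by (simp add: linear_add linear_scale)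
  moreover have "b (x + \<epsilon> *\<^sub>R e) > 0"
    using \<open>\<not> b x < 0\<close> \<open>\<epsilon> > 0\<close> e lin by (simp add: linear_add linear_scale add_nonneg_pos)
  moreover have "x + \<epsilon> *\<^sub>R e \<in> S"
    using S e x by (simp add: subspace_add subspace_scale)
  ultimately show False
    using disj by blast
qed

lemma no_three_disjoint_halfspaces:
  fixes l1 l2 l3 :: "'a::real_vector \<Rightarrow> real"
  assumes S: "subspace S" and lin: "linear l1" "linear l2" "linear l3"
    and x: "x1 \<in> S" "l1 x1 > 0" "x2 \<in> S" "l2 x2 > 0" "x3 \<in> S" "l3 x3 > 0"
    and d12: "\<forall>x\<in>S. \<not> (l1 x > 0 \<and> l2 x > 0)"
    and d13: "\<forall>x\<in>S. \<not> (l1 x > 0 \<and> l3 x > 0)"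
    and d23: "\<forall>x\<in>S. \<not> (l2 x > 0 \<and> l3 x > 0)"
  shows False
proof -
  have "l2 x1 < 0" "l3 x1 < 0" "l3 x2 < 0"
    using disjoint_halfspaces_opposite_sign[OF S lin(1,2) x(3,4) d12 x(1,2)]
      disjoint_halfspaces_opposite_sign[OF S lin(1,3) x(5,6) d13 x(1,2)]
      disjoint_halfspaces_opposite_sign[OF S lin(2,3) x(5,6) d23 x(3,4)] by auto
  \<comment> \<open>\<open>z\<close> lies in the kernel of \<open>l2\<close>, yet \<open>l3 z > 0\<close> forces \<open>l2 z < 0\<close>\<close>
  define z where "z = l2 x1 *\<^sub>R x2 - l2 x2 *\<^sub>R x1"
  have "z \<in> S"
    using S x by (simp add: z_def subspace_diff subspace_scale)
  have "l2 z = 0"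
    using lin by (simp add: z_def linear_diff linear_scale)
  have "l3 z = l2 x1 * l3 x2 - l2 x2 * l3 x1"
    using lin by (simp add: z_def linear_diff linear_scale)
  also have "\<dots> > 0"
    using \<open>l2 x1 < 0\<close> \<open>l3 x2 < 0\<close> \<open>l3 x1 < 0\<close> x(4)
    by (smt (verit) mult_neg_neg mult_pos_neg)
  finally have "l2 z < 0"
    using disjoint_halfspaces_opposite_sign[OF S lin(3,2) x(3,4)] d23 \<open>z \<in> S\<close> by blast
  with \<open>l2 z = 0\<close> show False
    by simp
qed

lemma disjoint_regions_along_ray:
  fixes f g :: "'a::real_vector \<Rightarrow> real"
  assumes "subspace S" "d \<in> S"
    and "\<forall>x\<in>S. \<not> (f x > 0 \<and> g x > 0)"
    and "eventually (\<lambda>t. f (t *\<^sub>R d) > 0) at_top" "eventually (\<lambda>t. g (t *\<^sub>R d) > 0) at_top"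
  shows False
proof -
  obtain t where "f (t *\<^sub>R d) > 0" "g (t *\<^sub>R d) > 0"
    using eventually_happens'[OF trivial_limit_at_top_linorder eventually_conj[OF assms(4,5)]]
    by blast
  then show False
    using assms(1-3) subspace_scale by blast
qed

definition affine_region :: "'a::real_vector set \<Rightarrow> real \<Rightarrow> ('a \<Rightarrow> real) \<Rightarrow> 'a set" where
  "affine_region S c l = {x \<in> S. c + l x > 0}"

lemma disjoint_affine_regions_imp_disjoint_halfspaces:
  assumes S: "subspace S" and lin: "linear la" "linear lb"
    and dj: "affine_region S ca la \<inter> affine_region S cb lb = {}"
  shows "\<forall>x\<in>S. \<not> (la x > 0 \<and> lb x > 0)"
proof (intro ballI notI)
  fix x assume "x \<in> S" "la x > 0 \<and> lb x > 0"
  then have "eventually (\<lambda>t. ca + la (t *\<^sub>R x) > 0) at_top"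
    "eventually (\<lambda>t. cb + lb (t *\<^sub>R x) > 0) at_top"
    using eventually_linear_pos[of "la x" ca] eventually_linear_pos[of "lb x" cb] lin
    by (simp_all add: linear_scale mult.commute add.commute)
  moreover have "\<forall>y\<in>S. \<not> (ca + la y > 0 \<and> cb + lb y > 0)"
    using dj by (auto simp: affine_region_def)
  ultimately show False
    using disjoint_regions_along_ray[OF S \<open>x \<in> S\<close>, where f = "\<lambda>y. ca + la y"
        and g = "\<lambda>y. cb + lb y"] by blast
qed

lemma affine_region_linear_part_pos:
  assumes S: "subspace S" and lin: "linear l"
    and "affine_region S c l \<noteq> {}" "X \<noteq> {}" "X \<subseteq> S" "affine_region S c l \<inter> X = {}"
  shows "\<exists>x\<in>S. l x > 0"
proof (rule ccontr)
  assume "\<not> (\<exists>x\<in>S. l x > 0)"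
  then have "l x = 0" if "x \<in> S" for x
    using that S lin by (metis linear_neg neg_0_less_iff_less not_less_iff_gr_or_eq subspace_neg)
  then have "affine_region S c l = S \<or> affine_region S c l = {}"
    by (auto simp: affine_region_def)
  then show False
    using assms(3-6) by blast
qed

lemma no_three_disjoint_affine_regions:
  assumes S: "subspace S" and lin: "linear l1" "linear l2" "linear l3"
    and ne: "affine_region S c1 l1 \<noteq> {}" "affine_region S c2 l2 \<noteq> {}" "affine_region S c3 l3 \<noteq> {}"
    and dj: "affine_region S c1 l1 \<inter> affine_region S c2 l2 = {}"
      "affine_region S c1 l1 \<inter> affine_region S c3 l3 = {}"
      "affine_region S c2 l2 \<inter> affine_region S c3 l3 = {}"
  shows False
proof -
  have sub: "affine_region S c l \<subseteq> S" for c l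
    by (auto simp: affine_region_def)
  obtain x1 x2 x3 where "x1 \<in> S" "l1 x1 > 0" "x2 \<in> S" "l2 x2 > 0" "x3 \<in> S" "l3 x3 > 0"
    using affine_region_linear_part_pos[OF S lin(1) ne(1) ne(2) sub dj(1)]
      affine_region_linear_part_pos[OF S lin(2) ne(2) ne(1) sub] dj(1)
      affine_region_linear_part_pos[OF S lin(3) ne(3) ne(1) sub] dj(2)
    by (metis inf_commute)
  then show False
    using no_three_disjoint_halfspaces[OF S lin]
      disjoint_affine_regions_imp_disjoint_halfspaces[OF S lin(1,2) dj(1)]
      disjoint_affine_regions_imp_disjoint_halfspaces[OF S lin(1,3) dj(2)]
      disjoint_affine_regions_imp_disjoint_halfspaces[OF S lin(2,3) dj(3)]
    by blast
qed

lemma linear_sgn_pos_iff: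
  fixes l :: "'a::real_normed_vector \<Rightarrow> real"
  assumes "linear l"
  shows "l (sgn y) > 0 \<longleftrightarrow> l y > 0"
  using assms by (cases "y = 0") (simp_all add: sgn_div_norm linear_scale linear_0 zero_less_mult_iff)

lemma sgn_chart_pos_nonempty_iff:
  fixes l :: "'a::real_normed_vector \<Rightarrow> real"
  assumes "P = (\<lambda>x. sgn (\<phi> x)) ` W" "linear l"
  shows "{y \<in> P. l y > 0} \<noteq> {} \<longleftrightarrow> (\<exists>x\<in>W. l (\<phi> x) > 0)"
  using assms(1) linear_sgn_pos_iff[OF assms(2)] by blast

lemma sgn_chart_pos_disjoint_iff:
  fixes l m :: "'a::real_normed_vector \<Rightarrow> real"
  assumes "P = (\<lambda>x. sgn (\<phi> x)) ` W" "linear l" "linear m"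
  shows "{y \<in> P. l y > 0} \<inter> {y \<in> P. m y > 0} = {} \<longleftrightarrow> (\<forall>x\<in>W. \<not> (l (\<phi> x) > 0 \<and> m (\<phi> x) > 0))"
  using assms(1) linear_sgn_pos_iff[OF assms(2)] linear_sgn_pos_iff[OF assms(3)] by blast

lemma hemisphere_sgn_chart:
  fixes l :: "'a::euclidean_space \<Rightarrow> real"
  assumes "linear l" "l e = 1"
  shows "sphere 0 1 \<inter> {y. l y > 0} = (\<lambda>x. sgn (e + x)) ` {x. l x = 0}"
proof (intro equalityI subsetI)
  fix y assume y: "y \<in> sphere 0 1 \<inter> {y. l y > 0}"
  have "sgn (e + (y /\<^sub>R l y - e)) = y"
    using y by (simp add: sgn_div_norm)
  moreover have "l (y /\<^sub>R l y - e) = 0"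
    using y assms by (simp add: linear_diff linear_scale)
  ultimately show "y \<in> (\<lambda>x. sgn (e + x)) ` {x. l x = 0}"
    by (metis (mono_tags, lifting) image_eqI mem_Collect_eq)
next
  fix y assume "y \<in> (\<lambda>x. sgn (e + x)) ` {x. l x = 0}"
  then obtain x where "l x = 0" "y = sgn (e + x)"
    by blast
  moreover have "l (e + x) = 1"
    using assms \<open>l x = 0\<close> by (simp add: linear_add)
  ultimately show "y \<in> sphere 0 1 \<inter> {y. l y > 0}"
    using linear_sgn_pos_iff[OF assms(1)] linear_0[OF assms(1)] by (auto simp: norm_sgn)
qed

lemma no_three_disjoint_hemisphere_sections:
  fixes H0 H1 H2 H3 :: "'a::euclidean_space set"
  assumes hemi: "hemisphere H0" "hemisphere H1" "hemisphere H2" "hemisphere H3"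
    and ne: "H0 \<inter> H1 \<noteq> {}" "H0 \<inter> H2 \<noteq> {}" "H0 \<inter> H3 \<noteq> {}"
    and dj: "(H0 \<inter> H1) \<inter> (H0 \<inter> H2) = {}" "(H0 \<inter> H1) \<inter> (H0 \<inter> H3) = {}"
      "(H0 \<inter> H2) \<inter> (H0 \<inter> H3) = {}"
  shows False
proof -
  obtain l0 l1 l2 l3 :: "'a \<Rightarrow> real" where lin: "linear l0" "linear l1" "linear l2" "linear l3"
    and "l0 \<noteq> (\<lambda>_. 0)" and H: "H0 = sphere 0 1 \<inter> {y. l0 y > 0}" "H1 = sphere 0 1 \<inter> {y. l1 y > 0}"
      "H2 = sphere 0 1 \<inter> {y. l2 y > 0}" "H3 = sphere 0 1 \<inter> {y. l3 y > 0}"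
    using hemi unfolding hemisphere_def by metis
  then obtain z where "l0 z \<noteq> 0"
    by auto
  define e where "e = z /\<^sub>R l0 z"
  have "l0 e = 1"
    using lin(1) \<open>l0 z \<noteq> 0\<close> by (simp add: e_def linear_scale)
  define K where "K = {x. l0 x = 0}"
  have K: "subspace K"
    unfolding K_def using lin(1) by (auto simp: subspace_def linear_add linear_scale linear_0)
  note chart = hemisphere_sgn_chart[OF lin(1) \<open>l0 e = 1\<close>, folded H(1) K_def]
  have sec: "H0 \<inter> Hi = {y \<in> H0. li y > 0}" if "Hi = sphere 0 1 \<inter> {y. li y > 0}" for Hi li
    using that H(1) by blast
  \<comment> \<open>in the chart \<open>x \<mapsto> sgn (e + x)\<close> of \<open>H0\<close>, the sections \<open>H0 \<inter> Hi\<close> become affine regions of \<open>K\<close>\<close>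
  have region: "li (e + x) > 0 \<longleftrightarrow> x \<in> affine_region K (li e) li" if "linear li" "x \<in> K" for li x
    using that by (simp add: affine_region_def linear_add)
  have ne': "affine_region K (li e) li \<noteq> {}"
    if "linear li" "H0 \<inter> Hi \<noteq> {}" "Hi = sphere 0 1 \<inter> {y. li y > 0}" for li Hi
    using that sgn_chart_pos_nonempty_iff[OF chart \<open>linear li\<close>] sec[OF that(3)] region[OF that(1)]
    by blast
  have dj': "affine_region K (li e) li \<inter> affine_region K (lj e) lj = {}"
    if "linear li" "linear lj" "(H0 \<inter> Hi) \<inter> (H0 \<inter> Hj) = {}"
      "Hi = sphere 0 1 \<inter> {y. li y > 0}" "Hj = sphere 0 1 \<inter> {y. lj y > 0}" for li lj Hi Hj
    using that sgn_chart_pos_disjoint_iff[OF chart that(1,2)] sec[OF that(4)] sec[OF that(5)]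
      region[OF that(1)] region[OF that(2)] by (auto simp: affine_region_def)
  show False
    using no_three_disjoint_affine_regions[OF K lin(2-4)]
      ne'[OF lin(2) ne(1) H(2)] ne'[OF lin(3) ne(2) H(3)] ne'[OF lin(4) ne(3) H(4)]
      dj'[OF lin(2,3) dj(1) H(2,3)] dj'[OF lin(2,4) dj(2) H(2,4)] dj'[OF lin(3,4) dj(3) H(3,4)]
    by blast
qed

lemma bform_add_left [simp]: "bform (x + y) z = bform x z + bform y z"
  by (simp add: bform_def inner_add_left)
lemma bform_add_right [simp]: "bform z (x + y) = bform z x + bform z y"
  by (simp add: bform_def inner_add_right)
lemma bform_diff_left [simp]: "bform (x - y) z = bform x z - bform y z"
  by (simp add: bform_def inner_diff_left)
lemma bform_diff_right [simp]: "bform z (x - y) = bform z x - bform z y"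
  by (simp add: bform_def inner_diff_right)
lemma bform_minus_left [simp]: "bform (- x) z = - bform x z"
  by (simp add: bform_def)
lemma bform_minus_right [simp]: "bform z (- x) = - bform z x"
  by (simp add: bform_def)
lemma bform_scaleR_left [simp]: "bform (c *\<^sub>R x) z = c * bform x z"
  by (simp add: bform_def algebra_simps)
lemma bform_scaleR_right [simp]: "bform z (c *\<^sub>R x) = c * bform z x"
  by (simp add: bform_def algebra_simps)
lemma bform_zero_right [simp]: "bform z 0 = 0"
  by (simp add: bform_def)
lemma bform_commute: "bform x y = bform y x"
  by (simp add: bform_def inner_commute)

lemma bform_eq_inner: "bform v w = (fst v, - snd v) \<bullet> w"
  by (simp add: bform_def inner_prod_def)

lemma linear_bform: "linear (bform v)"
  by (rule linearI) simp_all

definition bform_indefinite_on :: "('a::euclidean_space \<times> 'b::euclidean_space) set \<Rightarrow> bool" where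
  "bform_indefinite_on W \<longleftrightarrow> (\<exists>n\<in>W. bform n n < 0) \<and> (\<exists>p\<in>W. bform p p > 0)"

lemma bform_indefinite_onD:
  assumes "bform_indefinite_on W" "s \<noteq> 0"
  obtains m where "m \<in> W" "s * bform m m > 0"
  using assms unfolding bform_indefinite_on_def
  by (metis linorder_neqE_linordered_idom mult_neg_neg mult_pos_pos)

definition quadric_region ::
    "('a::euclidean_space \<times> 'b::euclidean_space) set \<Rightarrow> real \<Rightarrow> ('a \<times> 'b \<Rightarrow> real) \<Rightarrow> real \<Rightarrow> ('a \<times> 'b) set"
  where "quadric_region W c l k = {x \<in> W. c + l x - k * bform x x > 0}"

lemma quadric_region_zero: "quadric_region W c l 0 = affine_region W c l"
  by (simp add: quadric_region_def affine_region_def)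

lemma quadric_along_ray:
  fixes l :: "'a::euclidean_space \<times> 'b::euclidean_space \<Rightarrow> real"
  assumes "linear l"
  shows "c + l (t *\<^sub>R d) - k * bform (t *\<^sub>R d) (t *\<^sub>R d) = (- k * bform d d) * t^2 + l d * t + c"
  using assms by (simp add: linear_scale power2_eq_square algebra_simps)

lemma exists_direction_pos_and_sign:
  fixes l :: "'a::euclidean_space \<times> 'b::euclidean_space \<Rightarrow> real"
  assumes W: "subspace W" and "linear l"
    and e: "e \<in> W" "l e > 0" and m: "m \<in> W" "s * bform m m > 0"
  shows "\<exists>d\<in>W. l d > 0 \<and> s * bform d d > 0"
proof -
  define m' where "m' = (if l m \<ge> 0 then m else - m)"
  have m': "m' \<in> W" "l m' \<ge> 0" "bform m' m' = bform m m"
    using W m linear_neg[OF \<open>linear l\<close>, of m] by (auto simp: m'_def subspace_neg)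
  have "eventually (\<lambda>t. (s * bform m m) * t^2 + (2 * s * bform m' e) * t + s * bform e e > 0 \<and> t \<ge> 0) at_top"
    using eventually_quadratic_pos[OF m(2)] eventually_ge_at_top by (rule eventually_conj)
  then obtain t where t: "(s * bform m m) * t^2 + (2 * s * bform m' e) * t + s * bform e e > 0" "t \<ge> 0"
    using eventually_happens'[OF trivial_limit_at_top_linorder] by blast
  define d where "d = t *\<^sub>R m' + e"
  have "d \<in> W"
    using W m' e by (simp add: d_def subspace_add subspace_scale)
  moreover have "s * bform d d > 0"
    using t m'(3) bform_commute[of e m'] by (simp add: d_def power2_eq_square algebra_simps)
  moreover have "l d > 0"
    using t(2) m'(2) e \<open>linear l\<close> by (simp add: d_def linear_add linear_scale add_nonneg_pos)
  ultimately show ?thesis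
    by blast
qed

lemma disjoint_quadric_regions_along_ray:
  assumes W: "subspace W" and lin: "linear la" "linear lb" and "d \<in> W"
    and dj: "quadric_region W ca la ka \<inter> quadric_region W cb lb kb = {}"
    and a: "- ka * bform d d > 0 \<or> ka = 0 \<and> la d > 0"
    and b: "- kb * bform d d > 0 \<or> kb = 0 \<and> lb d > 0"
  shows False
proof -
  have ev: "eventually (\<lambda>t. c + l (t *\<^sub>R d) - k * bform (t *\<^sub>R d) (t *\<^sub>R d) > 0) at_top"
    if "linear l" "- k * bform d d > 0 \<or> k = 0 \<and> l d > 0" for c l k
    using that eventually_quadratic_pos[of "- k * bform d d" "l d" c]
      eventually_linear_pos[of "l d" c]
    unfolding quadric_along_ray[OF that(1)] by auto
  show False
    using disjoint_regions_along_ray[OF W \<open>d \<in> W\<close>, where f = "\<lambda>x. ca + la x - ka * bform x x"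
        and g = "\<lambda>x. cb + lb x - kb * bform x x"] ev[OF lin(1) a] ev[OF lin(2) b] dj
    by (auto simp: quadric_region_def)
qed

lemma disjoint_quadric_regions_zero_coeff:
  assumes W: "subspace W" "bform_indefinite_on W" and lin: "linear la" "linear lb"
    and ne: "quadric_region W ca la 0 \<noteq> {}" "quadric_region W cb lb kb \<noteq> {}"
    and dj: "quadric_region W ca la 0 \<inter> quadric_region W cb lb kb = {}"
  shows "kb = 0"
proof (rule ccontr)
  assume "kb \<noteq> 0"
  have "quadric_region W cb lb kb \<subseteq> W"
    by (auto simp: quadric_region_def)
  then obtain e where "e \<in> W" "la e > 0"
    using affine_region_linear_part_pos[OF W(1) lin(1)] ne dj by (metis quadric_region_zero)
  moreover obtain m where "m \<in> W" "- kb * bform m m > 0"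
    using bform_indefinite_onD[OF W(2)] \<open>kb \<noteq> 0\<close> by (metis neg_equal_0_iff_equal)
  ultimately obtain d where "d \<in> W" "la d > 0" "- kb * bform d d > 0"
    using exists_direction_pos_and_sign[OF W(1) lin(1)] by blast
  then show False
    using disjoint_quadric_regions_along_ray[OF W(1) lin \<open>d \<in> W\<close> dj] by simp
qed

lemma disjoint_quadric_regions_coeffs:
  assumes W: "subspace W" "bform_indefinite_on W" and lin: "linear la" "linear lb"
    and ne: "quadric_region W ca la ka \<noteq> {}" "quadric_region W cb lb kb \<noteq> {}"
    and dj: "quadric_region W ca la ka \<inter> quadric_region W cb lb kb = {}"
  shows "ka * kb < 0 \<or> ka = 0 \<and> kb = 0"
proof -
  have dj': "quadric_region W cb lb kb \<inter> quadric_region W ca la ka = {}"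
    using dj by blast
  have "kb = 0" if "ka = 0"
    using disjoint_quadric_regions_zero_coeff[OF W lin] ne dj unfolding that by blast
  moreover have "ka = 0" if "kb = 0"
    using disjoint_quadric_regions_zero_coeff[OF W lin(2,1)] ne dj' unfolding that by blast
  moreover have "\<not> ka * kb > 0"
  proof
    assume "ka * kb > 0"
    then have "- ka \<noteq> 0"
      by auto
    then obtain m where "m \<in> W" "- ka * bform m m > 0"
      by (rule bform_indefinite_onD[OF W(2)])
    moreover have "- kb * bform m m > 0"
      using calculation(2) \<open>ka * kb > 0\<close> by (auto simp: zero_less_mult_iff mult_less_0_iff)
    ultimately show False
      using disjoint_quadric_regions_along_ray[OF W(1) lin \<open>m \<in> W\<close> dj] by blast
  qed
  ultimately show ?thesis
    by (metis linorder_neqE_linordered_idom mult_eq_0_iff)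
qed

lemma no_three_disjoint_quadric_regions:
  assumes W: "subspace W" "bform_indefinite_on W" and lin: "linear l1" "linear l2" "linear l3"
    and ne: "quadric_region W c1 l1 k1 \<noteq> {}" "quadric_region W c2 l2 k2 \<noteq> {}"
      "quadric_region W c3 l3 k3 \<noteq> {}"
    and dj: "quadric_region W c1 l1 k1 \<inter> quadric_region W c2 l2 k2 = {}"
      "quadric_region W c1 l1 k1 \<inter> quadric_region W c3 l3 k3 = {}"
      "quadric_region W c2 l2 k2 \<inter> quadric_region W c3 l3 k3 = {}"
  shows False
proof -
  have "k1 * k2 < 0 \<or> k1 = 0 \<and> k2 = 0" "k1 * k3 < 0 \<or> k1 = 0 \<and> k3 = 0"
    "k2 * k3 < 0 \<or> k2 = 0 \<and> k3 = 0"
    using disjoint_quadric_regions_coeffs[OF W lin(1,2) ne(1,2) dj(1)]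
      disjoint_quadric_regions_coeffs[OF W lin(1,3) ne(1,3) dj(2)]
      disjoint_quadric_regions_coeffs[OF W lin(2,3) ne(2,3) dj(3)] by auto
  \<comment> \<open>three nonzero reals cannot have pairwise negative products\<close>
  then have "k1 = 0" "k2 = 0" "k3 = 0"
    by (smt (verit) mult_less_0_iff)+
  then show False
    using no_three_disjoint_affine_regions[OF W(1) lin] ne dj by (simp add: quadric_region_zero)
qed

definition positive_patch :: "('a::euclidean_space \<times> 'b::euclidean_space) \<Rightarrow> ('a \<times> 'b) set" where
  "positive_patch v = {w \<in> EinT. bform v w > 0}"

definition chart_domain :: "('a::euclidean_space \<times> 'b::euclidean_space) \<Rightarrow> ('a \<times> 'b) \<Rightarrow> ('a \<times> 'b) set" where
  "chart_domain v u = {x. bform u x = 0 \<and> bform v x = 0}"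

text \<open>For isotropic \<open>u, v\<close> with \<open>B(v,u) = 1\<close>, this parametrises the section \<open>B(v,\<cdot>) = 1\<close>
  of the null cone by the \<open>B\<close>-orthogonal complement of \<open>u, v\<close>.\<close>
definition null_chart :: "('a::euclidean_space \<times> 'b::euclidean_space) \<Rightarrow> ('a \<times> 'b) \<Rightarrow> ('a \<times> 'b) \<Rightarrow> ('a \<times> 'b)" where
  "null_chart v u x = u + x - (bform x x / 2) *\<^sub>R v"

text \<open>For isotropic \<open>v = (\<alpha>, \<beta>)\<close>, i.e. \<open>|\<alpha>| = |\<beta>|\<close>, this is \<open>(\<alpha>, -\<beta>) / (2 |\<alpha>|\<^sup>2)\<close>.\<close>
definition null_partner :: "('a::euclidean_space \<times> 'b::euclidean_space) \<Rightarrow> ('a \<times> 'b)" where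
  "null_partner v = ((1 / (2 * (fst v \<bullet> fst v))) *\<^sub>R fst v, - ((1 / (2 * (snd v \<bullet> snd v))) *\<^sub>R snd v))"

lemma subspace_chart_domain: "subspace (chart_domain v u)"
  unfolding chart_domain_def subspace_def by simp

lemma bform_null_chart:
  "bform a (null_chart v u x) = bform a u + bform a x - bform a v / 2 * bform x x"
  by (simp add: null_chart_def)

lemma null_chart_isotropic:
  assumes "bform v v = 0" "bform u u = 0" "bform v u = 1" "x \<in> chart_domain v u"
  shows "bform (null_chart v u x) (null_chart v u x) = 0" "bform v (null_chart v u x) = 1"
  using assms bform_commute[of x u] bform_commute[of x v] bform_commute[of u v]
  by (auto simp: null_chart_def chart_domain_def algebra_simps)

lemma null_chart_onto:
  assumes "bform v v = 0" "bform u u = 0" "bform v u = 1" "bform w w = 0" "bform v w = 1"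
  shows "null_chart v u (w - u - bform u w *\<^sub>R v) = w" "w - u - bform u w *\<^sub>R v \<in> chart_domain v u"
  using assms bform_commute[of u v] bform_commute[of w v] bform_commute[of w u]
  by (auto simp: null_chart_def chart_domain_def algebra_simps)

lemma positive_patch_sgn_chart:
  assumes uv: "bform v v = 0" "bform u u = 0" "bform v u = 1"
  shows "positive_patch v = (\<lambda>x. sgn (null_chart v u x)) ` chart_domain v u"
proof (intro equalityI subsetI)
  fix w assume "w \<in> positive_patch v"
  then have w: "bform w w = 0" "norm w = 1" "bform v w > 0"
    by (auto simp: positive_patch_def EinT_def)
  define w' where "w' = w /\<^sub>R bform v w"
  have "bform w' w' = 0" "bform v w' = 1"
    using w by (simp_all add: w'_def)
  note onto = null_chart_onto[OF uv this]
  have "sgn w' = w"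
    using w by (simp add: w'_def sgn_div_norm)
  then show "w \<in> (\<lambda>x. sgn (null_chart v u x)) ` chart_domain v u"
    using onto by (metis image_eqI)
next
  fix w assume "w \<in> (\<lambda>x. sgn (null_chart v u x)) ` chart_domain v u"
  then obtain x where x: "x \<in> chart_domain v u" "w = sgn (null_chart v u x)"
    by blast
  note iso = null_chart_isotropic[OF uv x(1)]
  then have "null_chart v u x \<noteq> 0"
    by auto
  then show "w \<in> positive_patch v"
    using iso x(2) by (simp add: positive_patch_def EinT_def sgn_div_norm norm_sgn)
qed

lemma null_partner:
  assumes "v \<noteq> 0" "bform v v = 0"
  shows "bform (null_partner v) (null_partner v) = 0" "bform v (null_partner v) = 1"
proof -
  have "fst v \<bullet> fst v = snd v \<bullet> snd v"
    using assms(2) by (simp add: bform_def)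
  moreover have "fst v \<noteq> 0" "snd v \<noteq> 0"
    using assms calculation by (metis inner_eq_zero_iff prod_eq_iff fst_zero snd_zero)+
  ultimately show "bform (null_partner v) (null_partner v) = 0" "bform v (null_partner v) = 1"
    by (simp_all add: null_partner_def bform_def power2_eq_square)
qed

lemma bform_indefinite_on_null_partner:
  fixes v :: "'a::euclidean_space \<times> 'b::euclidean_space"
  assumes "DIM('a) \<ge> 2" "DIM('b) \<ge> 2"
  shows "bform_indefinite_on (chart_domain v (null_partner v))"
proof -
  obtain y :: 'a where "y \<noteq> 0" "fst v \<bullet> y = 0"
    using orthogonal_to_vector_exists[OF assms(1)] by (auto simp: orthogonal_def)
  obtain z :: 'b where "z \<noteq> 0" "snd v \<bullet> z = 0"
    using orthogonal_to_vector_exists[OF assms(2)] by (auto simp: orthogonal_def)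
  have "(0, z) \<in> chart_domain v (null_partner v)" "bform (0, z) (0, z) < 0"
    "(y, 0) \<in> chart_domain v (null_partner v)" "bform (y, 0) (y, 0) > 0"
    using \<open>y \<noteq> 0\<close> \<open>fst v \<bullet> y = 0\<close> \<open>z \<noteq> 0\<close> \<open>snd v \<bullet> z = 0\<close>
    by (simp_all add: chart_domain_def null_partner_def bform_def)
  then show ?thesis
    unfolding bform_indefinite_on_def by blast
qed

lemma connected_positive_patch:
  assumes "v \<noteq> 0" "bform v v = 0"
  shows "connected (positive_patch v)"
proof -
  note uv = assms(2) null_partner[OF assms]
  let ?u = "null_partner v"
  have "continuous_on (chart_domain v ?u) (null_chart v ?u)"
    unfolding null_chart_def bform_def by (intro continuous_intros) simp
  moreover have "\<forall>x\<in>chart_domain v ?u. null_chart v ?u x \<noteq> 0"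
    using null_chart_isotropic(2)[OF uv] by force
  ultimately have "continuous_on (chart_domain v ?u) (\<lambda>x. sgn (null_chart v ?u x))"
    by (rule continuous_on_sgn)
  then show ?thesis
    unfolding positive_patch_sgn_chart[OF uv]
    by (intro connected_continuous_image convex_connected subspace_imp_convex subspace_chart_domain)
qed

lemma EinT_preimage_Mx: "EinT \<inter> piX -` Mx v = {w \<in> EinT. bform v w \<noteq> 0}"
proof (intro equalityI subsetI)
  fix w assume "w \<in> EinT \<inter> piX -` Mx v"
  then obtain w' where w': "w \<in> EinT" "span {w} = span {w'}" "bform v w' \<noteq> 0"
    unfolding piX_def Mx_def by auto
  have "w' \<in> span {w}"
    using w'(2) span_base by blast
  then obtain c where "w' = c *\<^sub>R w"
    unfolding span_singleton by blast
  then show "w \<in> {w \<in> EinT. bform v w \<noteq> 0}"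
    using w' by auto
next
  fix w assume w: "w \<in> {w \<in> EinT. bform v w \<noteq> 0}"
  then have "w \<noteq> 0 \<and> bform w w = 0 \<and> piX w = span {w} \<and> bform v w \<noteq> 0"
    by (auto simp: EinT_def piX_def)
  then show "w \<in> EinT \<inter> piX -` Mx v"
    using w unfolding Mx_def by blast
qed

lemma connected_component_eq_positive_patch:
  assumes v: "v \<noteq> 0" "bform v v = 0" and w0: "w0 \<in> positive_patch v"
  shows "connected_component_set {w \<in> EinT. bform v w \<noteq> 0} w0 = positive_patch v"
    (is "?C = _")
proof
  show "positive_patch v \<subseteq> ?C"
    using w0 connected_positive_patch[OF v]
    by (intro connected_component_maximal) (auto simp: positive_patch_def)
next
  have sub: "?C \<subseteq> {w \<in> EinT. bform v w \<noteq> 0}"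
    by (rule connected_component_subset)
  have "w0 \<in> ?C"
    using w0 by (auto simp: positive_patch_def)
  show "?C \<subseteq> positive_patch v"
  proof
    fix w assume "w \<in> ?C"
    \<comment> \<open>\<open>B(v,\<cdot>)\<close> is an inner product, so it cannot change sign on the connected set \<open>?C\<close>\<close>
    have "\<not> bform v w < 0"
    proof
      assume "bform v w < 0"
      then obtain z where "z \<in> ?C" "bform v z = 0"
        using connected_ivt_hyperplane[OF connected_connected_component \<open>w \<in> ?C\<close> \<open>w0 \<in> ?C\<close>,
            of "(fst v, - snd v)" 0] w0
        by (auto simp: bform_eq_inner positive_patch_def)
      then show False
        using sub by blast
    qed
    then show "w \<in> positive_patch v"
      using \<open>w \<in> ?C\<close> sub by (auto simp: positive_patch_def)
  qed
qed

lemma minkowski_patch_positive_patch: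
  assumes "minkowski_patch M"
  obtains v where "v \<noteq> 0" "bform v v = 0" "M = positive_patch v"
proof -
  obtain v w0 where v: "v \<noteq> 0" "bform v v = 0" and w0: "w0 \<in> EinT" "bform v w0 \<noteq> 0"
    and M: "M = connected_component_set {w \<in> EinT. bform v w \<noteq> 0} w0"
    using assms unfolding minkowski_patch_def EinT_preimage_Mx by blast
  \<comment> \<open>\<open>v\<close> and \<open>-v\<close> define the same \<open>M\<^sub>x\<close>; pick the sign making \<open>B(v, w0)\<close> positive\<close>
  define v' where "v' = (if bform v w0 > 0 then v else - v)"
  have v': "v' \<noteq> 0" "bform v' v' = 0" "w0 \<in> positive_patch v'"
    using v w0 by (auto simp: v'_def positive_patch_def)
  have "{w \<in> EinT. bform v w \<noteq> 0} = {w \<in> EinT. bform v' w \<noteq> 0}"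
    by (auto simp: v'_def)
  then have "M = positive_patch v'"
    using M connected_component_eq_positive_patch[OF v'] by simp
  with v' show ?thesis
    using that by blast
qed

lemma no_three_disjoint_positive_patch_sections:
  fixes v0 v1 v2 v3 :: "'a::euclidean_space \<times> 'b::euclidean_space"
  assumes dims: "DIM('a) \<ge> 2" "DIM('b) \<ge> 2" and v0: "v0 \<noteq> 0" "bform v0 v0 = 0"
    and ne: "positive_patch v0 \<inter> positive_patch v1 \<noteq> {}" "positive_patch v0 \<inter> positive_patch v2 \<noteq> {}"
      "positive_patch v0 \<inter> positive_patch v3 \<noteq> {}"
    and dj: "(positive_patch v0 \<inter> positive_patch v1) \<inter> (positive_patch v0 \<inter> positive_patch v2) = {}"
      "(positive_patch v0 \<inter> positive_patch v1) \<inter> (positive_patch v0 \<inter> positive_patch v3) = {}"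
      "(positive_patch v0 \<inter> positive_patch v2) \<inter> (positive_patch v0 \<inter> positive_patch v3) = {}"
  shows False
proof -
  let ?u = "null_partner v0"
  let ?W = "chart_domain v0 ?u"
  note chart = positive_patch_sgn_chart[OF v0(2) null_partner[OF v0]]
  have sec: "positive_patch v0 \<inter> positive_patch a = {y \<in> positive_patch v0. bform a y > 0}" for a
    by (auto simp: positive_patch_def)
  \<comment> \<open>in the chart \<open>null_chart\<close> of \<open>positive_patch v0\<close>, the sections become quadric regions of \<open>?W\<close>\<close>
  have region: "bform a (null_chart v0 ?u x) > 0 \<longleftrightarrow>
      x \<in> quadric_region ?W (bform a ?u) (bform a) (bform a v0 / 2)" if "x \<in> ?W" for a x
    using that by (simp add: quadric_region_def bform_null_chart)
  have ne': "quadric_region ?W (bform a ?u) (bform a) (bform a v0 / 2) \<noteq> {}"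
    if "positive_patch v0 \<inter> positive_patch a \<noteq> {}" for a
    using that sgn_chart_pos_nonempty_iff[OF chart linear_bform, of a] region
    unfolding sec by (auto simp: quadric_region_def)
  have dj': "quadric_region ?W (bform a ?u) (bform a) (bform a v0 / 2)
      \<inter> quadric_region ?W (bform b ?u) (bform b) (bform b v0 / 2) = {}"
    if "(positive_patch v0 \<inter> positive_patch a) \<inter> (positive_patch v0 \<inter> positive_patch b) = {}" for a b
    using that sgn_chart_pos_disjoint_iff[OF chart linear_bform linear_bform, of a b] region
    unfolding sec by (auto simp: quadric_region_def)
  show False
    using no_three_disjoint_quadric_regions[OF subspace_chart_domain
        bform_indefinite_on_null_partner[OF dims] linear_bform linear_bform linear_bform]
      ne'[OF ne(1)] ne'[OF ne(2)] ne'[OF ne(3)] dj'[OF dj(1)] dj'[OF dj(2)] dj'[OF dj(3)]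
    by blast
qed

theorem lemma3p7:
  shows
   "(\<forall>(H0::'a::euclidean_space set) (H::'i \<Rightarrow> 'a set) (I::'i set).
       hemisphere H0 \<and> (\<forall>i\<in>I. hemisphere (H i) \<and> H0 \<inter> H i \<noteq> {}) \<and>
       (\<forall>i\<in>I. \<forall>j\<in>I. i \<noteq> j \<longrightarrow> (H0 \<inter> H i) \<inter> (H0 \<inter> H j) = {})
       \<longrightarrow> finite I \<and> card I \<le> 2)
  \<and> ((DIM('p::euclidean_space) \<ge> 3 \<and> DIM('q::euclidean_space) \<ge> 3) \<longrightarrow>
     (\<forall>(M0::('p \<times> 'q) set) (M::'j \<Rightarrow> ('p \<times> 'q) set) (I::'j set).
       minkowski_patch M0 \<and> (\<forall>i\<in>I. minkowski_patch (M i) \<and> M0 \<inter> M i \<noteq> {}) \<and>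
       (\<forall>i\<in>I. \<forall>j\<in>I. i \<noteq> j \<longrightarrow> (M0 \<inter> M i) \<inter> (M0 \<inter> M j) = {})
       \<longrightarrow> finite I \<and> card I \<le> 2))"
proof (rule conjI; intro allI impI)
  fix H0 :: "'a set" and H :: "'i \<Rightarrow> 'a set" and I :: "'i set"
  assume H: "hemisphere H0 \<and> (\<forall>i\<in>I. hemisphere (H i) \<and> H0 \<inter> H i \<noteq> {}) \<and>
    (\<forall>i\<in>I. \<forall>j\<in>I. i \<noteq> j \<longrightarrow> (H0 \<inter> H i) \<inter> (H0 \<inter> H j) = {})"
  show "finite I \<and> card I \<le> 2"
  proof (rule card_le_2_if_no_three_distinct)
    fix i j k assume "i \<in> I" "j \<in> I" "k \<in> I" "i \<noteq> j" "i \<noteq> k" "j \<noteq> k"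
    then show False
      using no_three_disjoint_hemisphere_sections[of H0 "H i" "H j" "H k"] H by blast
  qed
next
  fix M0 :: "('p \<times> 'q) set" and M :: "'j \<Rightarrow> ('p \<times> 'q) set" and I :: "'j set"
  assume "DIM('p) \<ge> 3 \<and> DIM('q) \<ge> 3"
  then have dims: "DIM('p) \<ge> 2" "DIM('q) \<ge> 2"
    by auto
  assume M: "minkowski_patch M0 \<and> (\<forall>i\<in>I. minkowski_patch (M i) \<and> M0 \<inter> M i \<noteq> {}) \<and>
    (\<forall>i\<in>I. \<forall>j\<in>I. i \<noteq> j \<longrightarrow> (M0 \<inter> M i) \<inter> (M0 \<inter> M j) = {})"
  show "finite I \<and> card I \<le> 2"
  proof (rule card_le_2_if_no_three_distinct)
    fix i j k assume ijk: "i \<in> I" "j \<in> I" "k \<in> I" "i \<noteq> j" "i \<noteq> k" "j \<noteq> k"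
    obtain v0 v1 v2 v3 where v0: "v0 \<noteq> 0" "bform v0 v0 = 0" and patches: "M0 = positive_patch v0"
      "M i = positive_patch v1" "M j = positive_patch v2" "M k = positive_patch v3"
      using minkowski_patch_positive_patch M ijk(1-3) by metis
    have "M0 \<inter> M i \<noteq> {}" "M0 \<inter> M j \<noteq> {}" "M0 \<inter> M k \<noteq> {}" "(M0 \<inter> M i) \<inter> (M0 \<inter> M j) = {}"
      "(M0 \<inter> M i) \<inter> (M0 \<inter> M k) = {}" "(M0 \<inter> M j) \<inter> (M0 \<inter> M k) = {}"
      using M ijk by blast+
    then show False
      using no_three_disjoint_positive_patch_sections[OF dims v0] unfolding patches by blast
  qed
qed

end
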